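(* Let $p$ be a prime, $S\subseteq\mathbb{Z}_p$ and $0<\alpha\leq 1$. Then $$\tfrac12\mathcal{C}_\alpha(S)\leq \mathcal{C}^{\mathrm{bsgs}}_\alpha(S)\leq \mathcal{C}^{\mathrm{bsgs1}}_\alpha(S).$$
   Context: For $L\subseteq\mathbb{Z}_p^2$, $I(L)=\{x\in\mathbb{Z}_p\mid \exists (a,b),(a',b')\in L,\ (a,b)\neq(a',b'),\ ax+b=a'x+b'\}$, and the generic $\alpha$-complexity $\mathcal{C}_\alpha(S)$ is the smallest $|L|$ with $|S\cap I(L)|\ge\alpha|S|$. For $L\subseteq\mathbb{Z}_p^2$ and $C\subseteq\mathbb{Z}_p$, $I(L,C)=\{x\in\mathbb{Z}_p\mid \exists (a,b)\in L,\ c\in C \text{ with } a\neq0 \text{ and } ax+b=c\}$. The baby-step giant-step $\alpha$-complexity $\mathcal{C}^{\mathrm{bsgs}}_\alpha(S)$ is the smallest integer $m$ such that there exist $L\subseteq\mathbb{Z}_p^2$ and $C\subseteq\mathbb{Z}_p$ with $|L|=|C|=m$ and $|I(L,C)\cap S|\geq\alpha|S|$. The BSGS-1 $\alpha$-complexity $\mathcal{C}^{\mathrm{bsgs1}}_\alpha(S)$ is defined in the same way but with the additional requirement $L\subseteq\{1\}\times\mathbb{Z}_p$ (equivalently, the smallest $n$ such that there are $X,Y\subseteq\mathbb{Z}_p$ with $|X|=|Y|=n$ and $|S\cap(X-Y)|\ge\alpha|S|$, where $X-Y=\{x-y: x\in X, y\in Y\}$). *)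

theory Defs
  imports Complex_Main "HOL-Computational_Algebra.Primes"
begin

text \<open>Z_p is modelled as the set of residues {0..<p} of int, with arithmetic taken mod p.\<close>

definition zp :: "int \<Rightarrow> int set" where
  "zp p = {0..<p}"

definition Igen :: "int \<Rightarrow> (int \<times> int) set \<Rightarrow> int set" where
  "Igen p L = {x \<in> zp p. \<exists>a b a' b'. (a, b) \<in> L \<and> (a', b') \<in> L \<and> (a, b) \<noteq> (a', b')
                 \<and> (a * x + b) mod p = (a' * x + b') mod p}"

definition Ibsgs :: "int \<Rightarrow> (int \<times> int) set \<Rightarrow> int set \<Rightarrow> int set" where
  "Ibsgs p L C = {x \<in> zp p. \<exists>a b c. (a, b) \<in> L \<and> c \<in> C \<and> a \<noteq> 0
                 \<and> (a * x + b) mod p = c}"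

definition Cgen :: "int \<Rightarrow> real \<Rightarrow> int set \<Rightarrow> nat" where
  "Cgen p \<alpha> S = (LEAST n. \<exists>L. L \<subseteq> zp p \<times> zp p \<and> card L = n
                     \<and> real (card (S \<inter> Igen p L)) \<ge> \<alpha> * real (card S))"

definition Cbsgs :: "int \<Rightarrow> real \<Rightarrow> int set \<Rightarrow> nat" where
  "Cbsgs p \<alpha> S = (LEAST m. \<exists>L C. L \<subseteq> zp p \<times> zp p \<and> C \<subseteq> zp p \<and> card L = m \<and> card C = m
                     \<and> real (card (Ibsgs p L C \<inter> S)) \<ge> \<alpha> * real (card S))"

definition Cbsgs1 :: "int \<Rightarrow> real \<Rightarrow> int set \<Rightarrow> nat" where
  "Cbsgs1 p \<alpha> S = (LEAST m. \<exists>L C. L \<subseteq> {1} \<times> zp p \<and> C \<subseteq> zp p \<and> card L = m \<and> card C = m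
                     \<and> real (card (Ibsgs p L C \<inter> S)) \<ge> \<alpha> * real (card S))"

end

theory Submission
  imports Defs
begin

text \<open>Every baby-step giant-step configuration of lines L and targets C is turned into a
  generic one by adding the constant lines x \<mapsto> c for c \<in> C: a point x with a x + b = c
  is then an intersection of the distinct lines (a, b) and (0, c), because a \<noteq> 0. This costs
  at most |L| + |C| = 2m lines, giving the first inequality. The second holds because BSGS-1
  configurations are BSGS configurations. Both minima are taken over nonempty sets: the
  configuration L = {1} \<times> Z_p, C = Z_p covers all of Z_p.\<close>

lemma Ibsgs_translations_zp:
  assumes "1 < p"
  shows "Ibsgs p ({1} \<times> zp p) (zp p) = zp p"
proof
  show "zp p \<subseteq> Ibsgs p ({1} \<times> zp p) (zp p)"
  proof
    fix x assume x: "x \<in> zp p"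
    then have "(1 * x + 0) mod p = x" by (simp add: zp_def)
    moreover have "0 \<in> zp p" using assms by (simp add: zp_def)
    ultimately show "x \<in> Ibsgs p ({1} \<times> zp p) (zp p)"
      unfolding Ibsgs_def using x by force
  qed
qed (auto simp: Ibsgs_def)

lemma Ibsgs_subset_Igen_add_constants:
  assumes "C \<subseteq> zp p"
  shows "Ibsgs p L C \<subseteq> Igen p (L \<union> Pair 0 ` C)"
proof
  fix x assume "x \<in> Ibsgs p L C"
  then obtain a b c where x: "x \<in> zp p" "(a, b) \<in> L" "c \<in> C" "a \<noteq> 0"
      and meet: "(a * x + b) mod p = c"
    unfolding Ibsgs_def by blast
  have "(0 * x + c) mod p = c" using x(3) assms by (auto simp: zp_def)
  with meet have "(a * x + b) mod p = (0 * x + c) mod p" by simp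
  moreover have "(a, b) \<in> L \<union> Pair 0 ` C" "(0, c) \<in> L \<union> Pair 0 ` C" "(a, b) \<noteq> (0, c)"
    using x by auto
  ultimately show "x \<in> Igen p (L \<union> Pair 0 ` C)"
    unfolding Igen_def using x(1) by blast
qed

lemma Cgen_le_card:
  assumes "L \<subseteq> zp p \<times> zp p" and "\<alpha> * real (card S) \<le> real (card (S \<inter> Igen p L))"
  shows "Cgen p \<alpha> S \<le> card L"
  unfolding Cgen_def using assms by (intro Least_le) blast

lemma Cbsgs_le_card:
  assumes "L \<subseteq> zp p \<times> zp p" and "C \<subseteq> zp p" and "card L = m" and "card C = m"
    and "\<alpha> * real (card S) \<le> real (card (Ibsgs p L C \<inter> S))"
  shows "Cbsgs p \<alpha> S \<le> m"
  unfolding Cbsgs_def using assms by (intro Least_le) blast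

lemma bsgs1_translations_cover:
  assumes "1 < p" and "S \<subseteq> zp p" and "\<alpha> \<le> 1"
  shows "\<alpha> * real (card S) \<le> real (card (Ibsgs p ({1} \<times> zp p) (zp p) \<inter> S))"
proof -
  have "Ibsgs p ({1} \<times> zp p) (zp p) \<inter> S = S"
    using Ibsgs_translations_zp[OF assms(1)] assms(2) by blast
  then show ?thesis using mult_right_mono[OF assms(3), of "real (card S)"] by simp
qed

lemma Cbsgs1_attained:
  assumes "1 < p" and "S \<subseteq> zp p" and "\<alpha> \<le> 1"
  obtains L C where "L \<subseteq> {1} \<times> zp p" "C \<subseteq> zp p" "card L = Cbsgs1 p \<alpha> S"
    "card C = Cbsgs1 p \<alpha> S" "\<alpha> * real (card S) \<le> real (card (Ibsgs p L C \<inter> S))"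
proof -
  have "card ({1::int} \<times> zp p) = card (zp p)" by (simp add: card_cartesian_product)
  with bsgs1_translations_cover[OF assms]
  have "\<exists>m L C. L \<subseteq> {1} \<times> zp p \<and> C \<subseteq> zp p \<and> card L = m \<and> card C = m
          \<and> real (card (Ibsgs p L C \<inter> S)) \<ge> \<alpha> * real (card S)"
    by blast
  from LeastI_ex[OF this] show ?thesis
    using that unfolding Cbsgs1_def by blast
qed

lemma Cbsgs_attained:
  assumes "1 < p" and "S \<subseteq> zp p" and "\<alpha> \<le> 1"
  obtains L C where "L \<subseteq> zp p \<times> zp p" "C \<subseteq> zp p" "card L = Cbsgs p \<alpha> S"
    "card C = Cbsgs p \<alpha> S" "\<alpha> * real (card S) \<le> real (card (Ibsgs p L C \<inter> S))"
proof -
  have "{1} \<times> zp p \<subseteq> zp p \<times> zp p" using assms(1) by (auto simp: zp_def)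
  moreover have "card ({1::int} \<times> zp p) = card (zp p)" by (simp add: card_cartesian_product)
  ultimately have "\<exists>m L C. L \<subseteq> zp p \<times> zp p \<and> C \<subseteq> zp p \<and> card L = m \<and> card C = m
          \<and> real (card (Ibsgs p L C \<inter> S)) \<ge> \<alpha> * real (card S)"
    using bsgs1_translations_cover[OF assms] by blast
  from LeastI_ex[OF this] show ?thesis
    using that unfolding Cbsgs_def by blast
qed

lemma Cbsgs_le_Cbsgs1:
  assumes "1 < p" and "S \<subseteq> zp p" and "\<alpha> \<le> 1"
  shows "Cbsgs p \<alpha> S \<le> Cbsgs1 p \<alpha> S"
proof -
  obtain L C where L: "L \<subseteq> {1} \<times> zp p" and "C \<subseteq> zp p" "card L = Cbsgs1 p \<alpha> S"
      "card C = Cbsgs1 p \<alpha> S" "\<alpha> * real (card S) \<le> real (card (Ibsgs p L C \<inter> S))"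
    using Cbsgs1_attained[OF assms] .
  moreover have "L \<subseteq> zp p \<times> zp p" using L assms(1) by (auto simp: zp_def)
  ultimately show ?thesis by (intro Cbsgs_le_card)
qed

lemma Cgen_le_twice_Cbsgs:
  assumes "1 < p" and "S \<subseteq> zp p" and "\<alpha> \<le> 1"
  shows "Cgen p \<alpha> S \<le> 2 * Cbsgs p \<alpha> S"
proof -
  obtain L C where L: "L \<subseteq> zp p \<times> zp p" and C: "C \<subseteq> zp p" and "card L = Cbsgs p \<alpha> S"
      "card C = Cbsgs p \<alpha> S" and covers: "\<alpha> * real (card S) \<le> real (card (Ibsgs p L C \<inter> S))"
    using Cbsgs_attained[OF assms] .
  define L' where "L' = L \<union> Pair 0 ` C"
  have L'_sub: "L' \<subseteq> zp p \<times> zp p" using L C assms(1) by (auto simp: L'_def zp_def)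
  have "finite (Igen p L')" by (rule finite_subset[of _ "zp p"]) (auto simp: Igen_def zp_def)
  then have "card (Ibsgs p L C \<inter> S) \<le> card (S \<inter> Igen p L')"
    using Ibsgs_subset_Igen_add_constants[OF C] by (intro card_mono) (auto simp: L'_def)
  with covers have "Cgen p \<alpha> S \<le> card L'"
    by (intro Cgen_le_card[OF L'_sub]) linarith
  also have "\<dots> \<le> card L + card (Pair (0::int) ` C)" unfolding L'_def by (rule card_Un_le)
  also have "\<dots> \<le> card L + card C" by (simp add: card_image inj_on_def)
  finally show ?thesis using \<open>card L = _\<close> \<open>card C = _\<close> by simp
qed

theorem proposition3:
  fixes p :: int and S :: "int set" and \<alpha> :: real
  assumes "prime p" and "S \<subseteq> zp p" and "0 < \<alpha>" and "\<alpha> \<le> 1"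
  shows "real (Cgen p \<alpha> S) / 2 \<le> real (Cbsgs p \<alpha> S)
         \<and> Cbsgs p \<alpha> S \<le> Cbsgs1 p \<alpha> S"
proof -
  have "1 < p" using \<open>prime p\<close> prime_gt_1_int by blast
  with assms have "Cgen p \<alpha> S \<le> 2 * Cbsgs p \<alpha> S" "Cbsgs p \<alpha> S \<le> Cbsgs1 p \<alpha> S"
    by (simp_all add: Cgen_le_twice_Cbsgs Cbsgs_le_Cbsgs1)
  then show ?thesis by linarith
qed

end
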